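(* Let $K,M\in\mathbb{N}$, $L>0$, and let $\mathbf{x}$ be a random vector with probability density $p\colon\mathbb{R}^K\to\mathbb{R}_+$ supported on $[0,1]^K$ which is $L$-Lipschitz on $\mathbb{R}^K$ with respect to the $\ell_1$-norm. Let $\bar{\mathbf{x}}=\Delta_M(\mathbf{x})+\mathbf{u}$, where $\Delta_M$ acts element-wise by $\Delta_M(x)=\lfloor Mx\rfloor/M$ and $\mathbf{u}$ is uniform on $[0,\frac1M]^K$, independent of $\mathbf{x}$. Define $\eta(K,L):=\frac1K\big(\frac{2(K+1)!}{L}\big)^{\frac1{K+1}}$ and $\alpha:=\frac{\sqrt{e^2+4}-e}{2e}$. If $M\ge\frac{1}{\alpha\,\eta(K,L)}$, then \[ |h(\bar{\mathbf{x}})-h(\mathbf{x})|\le\frac{LK}{2M}\log\big(M\eta(K,L)\big). \]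
   Context: $h(\cdot)$ denotes differential entropy of a continuous random vector, $h(\mathbf{x})=-\int p\log p\,\mathrm{d}\lambda^K$. *)

theory Defs
  imports "HOL-Probability.Probability"
begin

text \<open>l1-distance on R^K (components indexed by the finite type 'n, K = CARD('n)).\<close>
definition l1_dist :: "real^'n \<Rightarrow> real^'n \<Rightarrow> real" where
  "l1_dist x y = (\<Sum>i\<in>UNIV. \<bar>x $ i - y $ i\<bar>)"

definition quantize :: "nat \<Rightarrow> real^'n \<Rightarrow> real^'n" where
  "quantize M x = (\<chi> i. real_of_int \<lfloor>real M * x $ i\<rfloor> / real M)"

definition diff_entropy :: "(real^'n \<Rightarrow> real) \<Rightarrow> real" where
  "diff_entropy p = - (\<integral>x. p x * ln (p x) \<partial>lborel)"

definition eta :: "nat \<Rightarrow> real \<Rightarrow> real" where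
  "eta K L = (1 / real K) * (2 * fact (K + 1) / L) powr (1 / real (K + 1))"

definition alpha :: real where
  "alpha = (sqrt (exp 2 + 4) - exp 1) / (2 * exp 1)"

end

theory Submission
  imports Defs
begin

text \<open>
  The dithered quantization \<open>\<Delta>\<^sub>M(x) + u\<close> has a density which is constant on every grid cell
  of side \<open>1/M\<close>, equal to the mean \<open>c\<close> of \<open>p\<close> over that cell. On a cell of volume \<open>v\<close>, the
  tangent line of the convex function \<open>t ln t\<close> at \<open>c\<close> gives \<open>v c ln c \<le> \<integral> p ln p\<close>, while the
  Lipschitz bound \<open>p \<le> c + LK/M\<close> together with \<open>ln (1 + \<delta>/c) \<le> \<delta>/c\<close> gives
  \<open>\<integral> p ln p \<le> v c ln c + v LK/M\<close>. A Lipschitz density vanishing off \<open>[0,1]\<^sup>K\<close> vanishes on its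
  boundary, so only the \<open>M\<^sup>K\<close> cells inside the cube carry mass, and summing gives
  \<open>0 \<le> h(\<Delta>\<^sub>M(x) + u) - h(x) \<le> LK/M\<close>. Finally \<open>1/\<alpha> = e(\<surd>(e\<^sup>2+4) + e)/2 > e\<^sup>2\<close>, so the hypothesis on
  \<open>M\<close> forces \<open>ln (M \<eta>) > 2\<close>, and \<open>LK/M \<le> (LK/2M) ln (M \<eta>)\<close>.
\<close>

section \<open>Bounds for t ln t and its integrals\<close>

lemma mult_ln_ge_tangent:
  fixes t c :: real
  assumes "0 \<le> t" and "0 < c"
  shows "t * ln c + (t - c) \<le> t * ln t"
proof (cases "t = 0")
  case False
  with assms have "0 < t" by simp
  have "ln (c / t) \<le> c / t - 1"
    using \<open>0 < t\<close> assms(2) by (intro ln_le_minus_one) simp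
  then have "t * (ln c - ln t) \<le> t * (c / t - 1)"
    using \<open>0 < t\<close> assms(2) by (simp add: ln_div)
  then show ?thesis
    using \<open>0 < t\<close> by (simp add: algebra_simps)
qed (use assms in simp)

lemma mult_ln_le_of_le_add:
  fixes t c d :: real
  assumes "0 \<le> t" and "0 < c" and "0 \<le> d" and "t \<le> c + d"
  shows "t * ln t \<le> t * (ln c + d / c)"
proof (cases "t = 0")
  case False
  with assms(1) have "0 < t" by simp
  have "ln t \<le> ln (c * (1 + d / c))"
    using \<open>0 < t\<close> assms(2,4) by (simp add: algebra_simps)
  also have "\<dots> = ln c + ln (1 + d / c)"
    using assms(2,3) add_pos_nonneg[of 1 "d / c"] by (simp add: ln_mult)
  also have "\<dots> \<le> ln c + d / c"
    using assms(2,3) by (simp add: ln_add_one_self_le_self)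
  finally show ?thesis
    using \<open>0 < t\<close> by simp
qed simp

lemma abs_mult_ln_le:
  fixes t B :: real
  assumes "0 \<le> t" and "t \<le> B"
  shows "\<bar>t * ln t\<bar> \<le> 1 + B\<^sup>2"
proof -
  have "t - 1 \<le> t * ln t"
    using mult_ln_ge_tangent[of t 1] assms(1) by simp
  moreover have "t * ln t \<le> t * B"
    using mult_ln_le_of_le_add[of t 1 B] assms by simp
  moreover have "t * B \<le> B\<^sup>2"
    using assms by (simp add: power2_eq_square mult_right_mono)
  ultimately show ?thesis
    using assms(1) by (simp add: abs_le_iff) (smt (verit) zero_le_power2)
qed

lemma set_integral_mult_ln_eq_0:
  fixes f :: "'a \<Rightarrow> real"
  assumes "S \<in> sets N" and "\<And>x. 0 \<le> f x" and "integrable N (\<lambda>x. f x * indicator S x)"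
    and "(\<integral>x. f x * indicator S x \<partial>N) = 0"
  shows "(\<integral>x. f x * ln (f x) * indicator S x \<partial>N) = 0"
proof -
  have "AE x in N. f x * indicator S x = 0"
    using assms by (subst (asm) integral_nonneg_eq_0_iff_AE) auto
  then have "AE x in N. f x * ln (f x) * indicator S x = 0"
    by eventually_elim (auto split: split_indicator)
  then show ?thesis
    by (simp add: integral_eq_zero_AE)
qed

lemma set_integral_mult_ln_ge_mean:
  fixes f :: "'a \<Rightarrow> real"
  assumes S: "S \<in> sets N" "0 < measure N S" and f_nonneg: "\<And>x. 0 \<le> f x"
    and int_f: "integrable N (\<lambda>x. f x * indicator S x)"
    and int_f_ln_f: "integrable N (\<lambda>x. f x * ln (f x) * indicator S x)"
  defines "c \<equiv> (\<integral>x. f x * indicator S x \<partial>N) / measure N S"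
  shows "measure N S * (c * ln c) \<le> (\<integral>x. f x * ln (f x) * indicator S x \<partial>N)"
proof -
  have mass: "(\<integral>x. f x * indicator S x \<partial>N) = c * measure N S"
    using S(2) by (simp add: c_def)
  have "0 \<le> c"
    using S(2) f_nonneg by (simp add: c_def integral_nonneg)
  show ?thesis
  proof (cases "c = 0")
    case True
    then show ?thesis
      using set_integral_mult_ln_eq_0[OF S(1) f_nonneg int_f] mass by simp
  next
    case False
    with \<open>0 \<le> c\<close> have "0 < c" by simp
    have "emeasure N S < \<infinity>"
      using S(2) measure_zero_top[of N S] by (auto simp: less_top[symmetric])
    then have int_S: "integrable N (\<lambda>x. c * indicator S x)"
      using S(1) by simp
    have "measure N S * (c * ln c)
        = (\<integral>x. (ln c + 1) * (f x * indicator S x) - c * indicator S x \<partial>N)"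
      using int_f int_S S(1) by (simp add: mass sets.Int_space_eq2 algebra_simps)
    also have "\<dots> \<le> (\<integral>x. f x * ln (f x) * indicator S x \<partial>N)"
      using int_f int_S int_f_ln_f mult_ln_ge_tangent[OF f_nonneg \<open>0 < c\<close>]
      by (intro integral_mono) (auto split: split_indicator simp: algebra_simps)
    finally show ?thesis .
  qed
qed

lemma set_integral_mult_ln_le_mean:
  fixes f :: "'a \<Rightarrow> real"
  assumes S: "S \<in> sets N" "0 < measure N S" and f_nonneg: "\<And>x. 0 \<le> f x"
    and int_f: "integrable N (\<lambda>x. f x * indicator S x)"
    and int_f_ln_f: "integrable N (\<lambda>x. f x * ln (f x) * indicator S x)"
  defines "c \<equiv> (\<integral>x. f x * indicator S x \<partial>N) / measure N S"
  shows "\<lbrakk>0 \<le> d; \<And>x. x \<in> S \<Longrightarrow> f x \<le> c + d\<rbrakk> \<Longrightarrow>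
    (\<integral>x. f x * ln (f x) * indicator S x \<partial>N) \<le> measure N S * (c * ln c + d)"
proof -
  assume "0 \<le> d" and f_le: "\<And>x. x \<in> S \<Longrightarrow> f x \<le> c + d"
  have mass: "(\<integral>x. f x * indicator S x \<partial>N) = c * measure N S"
    using S(2) by (simp add: c_def)
  have "0 \<le> c"
    using S(2) f_nonneg by (simp add: c_def integral_nonneg)
  show ?thesis
  proof (cases "c = 0")
    case True
    then show ?thesis
      using set_integral_mult_ln_eq_0[OF S(1) f_nonneg int_f] mass S(2) \<open>0 \<le> d\<close> by simp
  next
    case False
    with \<open>0 \<le> c\<close> have "0 < c" by simp
    have "(\<integral>x. f x * ln (f x) * indicator S x \<partial>N)
        \<le> (\<integral>x. (ln c + d / c) * (f x * indicator S x) \<partial>N)"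
      using int_f int_f_ln_f f_le mult_ln_le_of_le_add[OF f_nonneg \<open>0 < c\<close> \<open>0 \<le> d\<close>]
      by (intro integral_mono) (auto split: split_indicator simp: mult.commute)
    also have "\<dots> = measure N S * (c * ln c + d)"
      using \<open>0 < c\<close> by (simp only: integral_mult_right_zero mass) (simp add: field_simps)
    finally show ?thesis .
  qed
qed

section \<open>Grid cells of side 1/M\<close>

definition grid_index :: "nat \<Rightarrow> real^'n \<Rightarrow> 'n \<Rightarrow> int" where
  "grid_index M y = (\<lambda>i. \<lfloor>real M * y $ i\<rfloor>)"

definition grid_cell :: "nat \<Rightarrow> ('n \<Rightarrow> int) \<Rightarrow> (real^'n) set" where
  "grid_cell M z = {y. grid_index M y = z}"

definition unit_grid :: "nat \<Rightarrow> ('n::finite \<Rightarrow> int) set" where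
  "unit_grid M = Pi\<^sub>E UNIV (\<lambda>_. {0..<int M})"

definition cell_mean :: "nat \<Rightarrow> (real^'n \<Rightarrow> real) \<Rightarrow> ('n \<Rightarrow> int) \<Rightarrow> real" where
  "cell_mean M p z = (\<integral>x. p x * indicator (grid_cell M z) x \<partial>lborel) / measure lborel (grid_cell M z)"

definition cellwise_mean :: "nat \<Rightarrow> (real^'n::finite \<Rightarrow> real) \<Rightarrow> real^'n \<Rightarrow> real" where
  "cellwise_mean M p y = (\<Sum>z\<in>unit_grid M. cell_mean M p z * indicator (grid_cell M z) y)"

lemma finite_unit_grid: "finite (unit_grid M)"
  unfolding unit_grid_def by (rule finite_PiE) auto

lemma card_unit_grid: "card (unit_grid M :: ('n::finite \<Rightarrow> int) set) = M ^ CARD('n)"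
  unfolding unit_grid_def by (simp add: card_PiE)

lemma sets_grid_cell [measurable]: "grid_cell M z \<in> sets (borel :: (real^'n) measure)"
proof -
  have "grid_cell M z = {y\<in>space borel. \<forall>i. \<lfloor>real M * y $ i\<rfloor> = z i}"
    by (auto simp: grid_cell_def grid_index_def fun_eq_iff)
  also have "\<dots> \<in> sets borel" by measurable
  finally show ?thesis .
qed

lemma mem_grid_cell_iff:
  assumes "M > 0"
  shows "y \<in> grid_cell M z \<longleftrightarrow>
    (\<forall>i. z i / real M \<le> y $ i \<and> y $ i < z i / real M + 1 / real M)"
  using assms by (simp add: grid_cell_def grid_index_def fun_eq_iff floor_eq_iff field_simps)

lemma grid_cell_between_boxes:
  fixes z :: "'n::finite \<Rightarrow> int"
  assumes "M > 0"
  defines "a \<equiv> \<chi> i. z i / real M"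
  shows "box a (a + (\<chi> i. 1 / real M)) \<subseteq> grid_cell M z"
    and "grid_cell M z \<subseteq> cbox a (a + (\<chi> i. 1 / real M))"
  using assms by (auto simp: mem_grid_cell_iff mem_box_cart less_imp_le)

lemma emeasure_lborel_cube:
  fixes a :: "real^'n"
  assumes "d \<ge> 0"
  shows "emeasure lborel (cbox a (a + (\<chi> i. d))) = ennreal (d ^ CARD('n))"
    and "emeasure lborel (box a (a + (\<chi> i. d))) = ennreal (d ^ CARD('n))"
proof -
  have "(\<Prod>b\<in>Basis. (a + (\<chi> i. d) - a) \<bullet> b) = (\<Prod>b\<in>(Basis::(real^'n) set). d)"
    by (rule prod.cong) (auto simp: Basis_vec_def cart_eq_inner_axis[symmetric])
  moreover have "\<forall>b\<in>Basis. a \<bullet> b \<le> (a + (\<chi> i. d)) \<bullet> b"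
    using assms by (auto simp: Basis_vec_def inner_add_left cart_eq_inner_axis[symmetric])
  ultimately show "emeasure lborel (cbox a (a + (\<chi> i. d))) = ennreal (d ^ CARD('n))"
    and "emeasure lborel (box a (a + (\<chi> i. d))) = ennreal (d ^ CARD('n))"
    by (simp_all add: emeasure_lborel_cbox_eq emeasure_lborel_box_eq)
qed

lemma emeasure_grid_cell:
  assumes "M > 0"
  shows "emeasure lborel (grid_cell M z :: (real^'n) set) = ennreal ((1 / real M) ^ CARD('n))"
proof (rule antisym)
  show "emeasure lborel (grid_cell M z) \<le> ennreal ((1 / real M) ^ CARD('n))"
    using emeasure_mono[OF grid_cell_between_boxes(2)[OF assms, of z], of lborel]
      emeasure_lborel_cube(1)[of "1 / real M" "\<chi> i. z i / real M"] by simp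
  show "ennreal ((1 / real M) ^ CARD('n)) \<le> emeasure lborel (grid_cell M z)"
    using emeasure_mono[OF grid_cell_between_boxes(1)[OF assms, of z], of lborel]
      emeasure_lborel_cube(2)[of "1 / real M" "\<chi> i. z i / real M"] by simp
qed

lemma measure_grid_cell:
  "M > 0 \<Longrightarrow> measure lborel (grid_cell M z :: (real^'n) set) = (1 / real M) ^ CARD('n)"
  by (simp add: measure_def emeasure_grid_cell)

lemma AE_mem_cube_iff_mem_grid_cell:
  assumes "M > 0"
  shows "AE u in lborel. u \<in> cbox (0::real^'n) (\<chi> i. 1 / real M) \<longleftrightarrow> u \<in> grid_cell M (\<lambda>i. 0)"
proof (rule AE_I')
  let ?c = "(\<chi> i. 1 / real M) :: real^'n"
  have "emeasure lborel (cbox 0 ?c - box 0 ?c) = emeasure lborel (cbox 0 ?c) - emeasure lborel (box 0 ?c)"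
    using emeasure_lborel_cube(2)[of "1 / real M" "0::real^'n"] by (intro emeasure_Diff) (auto simp: box_subset_cbox)
  then show "cbox 0 ?c - box 0 ?c \<in> null_sets lborel"
    using emeasure_lborel_cube[of "1 / real M" "0::real^'n"] by (simp add: null_sets_def)
  show "{u \<in> space lborel. (u \<in> cbox 0 ?c) \<noteq> (u \<in> grid_cell M (\<lambda>i. 0))} \<subseteq> cbox 0 ?c - box 0 ?c"
    using grid_cell_between_boxes[OF assms, of "\<lambda>i. 0"] by (auto simp: zero_vec_def[symmetric])
qed

lemma sum_indicator_grid_cell:
  "finite Z \<Longrightarrow> (\<Sum>z\<in>Z. g z * indicator (grid_cell M z) y) =
     (if grid_index M y \<in> Z then g (grid_index M y) else (0::'a::semiring_1))"
  by (simp add: grid_cell_def indicator_def if_distrib[of "(*) _"] cong: if_cong)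

lemma grid_index_notin_unit_grid:
  assumes "M > 0" and "grid_index M y \<notin> unit_grid M"
  obtains i where "y $ i < 0 \<or> 1 \<le> y $ i"
proof -
  obtain i where "\<lfloor>real M * y $ i\<rfloor> \<notin> {0..<int M}"
    using assms(2) unfolding unit_grid_def grid_index_def PiE_UNIV_domain Pi_iff by blast
  then have "real M * y $ i < 0 \<or> real M * 1 \<le> real M * y $ i"
    by (auto simp: le_floor_iff not_less)
  then have "y $ i < 0 \<or> 1 \<le> y $ i"
    using assms(1) by (auto simp: mult_less_0_iff mult_le_cancel_left_pos)
  then show thesis by (rule that)
qed

lemma l1_dist_le_in_grid_cell:
  assumes "M > 0" and "x \<in> grid_cell M z" and "y \<in> grid_cell M z"
  shows "l1_dist x (y :: real^'n) \<le> CARD('n) / real M"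
proof -
  have "\<bar>x $ i - y $ i\<bar> \<le> 1 / real M" for i
    using assms(2,3) unfolding mem_grid_cell_iff[OF assms(1)] by (smt (verit))
  then have "l1_dist x y \<le> (\<Sum>i\<in>(UNIV::'n set). 1 / real M)"
    unfolding l1_dist_def by (intro sum_mono)
  then show ?thesis by simp
qed

lemma borel_measurable_quantize [measurable]: "quantize M \<in> borel_measurable (borel :: (real^'n) measure)"
proof (subst borel_measurable_euclidean_space, intro ballI)
  fix b :: "real^'n" assume "b \<in> Basis"
  then obtain j where "b = axis j 1" by (auto simp: Basis_vec_def)
  then have "(\<lambda>x. quantize M x \<bullet> b) = (\<lambda>x. \<lfloor>real M * x $ j\<rfloor> / real M)"
    by (auto simp: quantize_def cart_eq_inner_axis[symmetric])
  then show "(\<lambda>x. quantize M x \<bullet> b) \<in> borel_measurable borel" by simp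
qed

lemma diff_quantize_mem_grid_cell_0_iff:
  assumes "M > 0"
  shows "y - quantize M x \<in> grid_cell M (\<lambda>i. 0) \<longleftrightarrow> y \<in> grid_cell M (grid_index M x)"
proof -
  have "real M * (y $ i - \<lfloor>real M * x $ i\<rfloor> / real M) = real M * y $ i - \<lfloor>real M * x $ i\<rfloor>" for i
    using assms by (simp add: field_simps)
  then show ?thesis
    by (simp add: grid_cell_def grid_index_def quantize_def fun_eq_iff)
qed

lemma cell_mean_nonneg: "(\<And>x. 0 \<le> p x) \<Longrightarrow> 0 \<le> cell_mean M p z"
  unfolding cell_mean_def by (intro divide_nonneg_nonneg integral_nonneg) auto

lemma cellwise_mean_nonneg: "(\<And>x. 0 \<le> p x) \<Longrightarrow> 0 \<le> cellwise_mean M p y"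
  unfolding cellwise_mean_def by (intro sum_nonneg) (simp add: cell_mean_nonneg)

lemma borel_measurable_cellwise_mean [measurable]: "cellwise_mean M p \<in> borel_measurable borel"
  unfolding cellwise_mean_def by measurable

lemma integrable_mult_indicator_grid_cell:
  fixes z :: "'n::finite \<Rightarrow> int"
  shows "0 < M \<Longrightarrow> integrable lborel (\<lambda>y. c * indicator (grid_cell M z) y :: real)"
  by (intro integrable_mult_right integrable_real_indicator) (simp_all add: emeasure_grid_cell)

lemma integral_mult_indicator_grid_cell:
  fixes z :: "'n::finite \<Rightarrow> int"
  shows "0 < M \<Longrightarrow> (\<integral>y. c * indicator (grid_cell M z) y \<partial>lborel) = (1 / real M) ^ CARD('n) * c"
  by (simp add: emeasure_grid_cell measure_grid_cell)

lemma integral_eq_sum_grid_cells: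
  fixes f :: "real^'n \<Rightarrow> real"
  assumes "integrable lborel f" and "\<And>y. grid_index M y \<notin> unit_grid M \<Longrightarrow> f y = 0"
  shows "(\<integral>y. f y \<partial>lborel) = (\<Sum>z\<in>unit_grid M. \<integral>y. f y * indicator (grid_cell M z) y \<partial>lborel)"
proof -
  have "f y = (\<Sum>z\<in>unit_grid M. f y * indicator (grid_cell M z) y)" for y
    unfolding sum_indicator_grid_cell[OF finite_unit_grid] using assms(2)[of y] by auto
  then have "(\<integral>y. f y \<partial>lborel) = (\<integral>y. (\<Sum>z\<in>unit_grid M. f y * indicator (grid_cell M z) y) \<partial>lborel)"
    by simp
  also have "\<dots> = (\<Sum>z\<in>unit_grid M. \<integral>y. f y * indicator (grid_cell M z) y \<partial>lborel)"
    using assms(1) by (intro Bochner_Integration.integral_sum integrable_real_mult_indicator) auto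
  finally show ?thesis .
qed

lemma integral_cellwise_mean_mult_ln:
  fixes p :: "real^'n \<Rightarrow> real"
  assumes "0 < M"
  shows "(\<integral>y. cellwise_mean M p y * ln (cellwise_mean M p y) \<partial>lborel) =
    (\<Sum>z\<in>unit_grid M. (1 / real M) ^ CARD('n) * (cell_mean M p z * ln (cell_mean M p z)))"
proof -
  let ?g = "\<lambda>z. cell_mean M p z * ln (cell_mean M p z)"
  have "cellwise_mean M p y * ln (cellwise_mean M p y) =
      (\<Sum>z\<in>unit_grid M. ?g z * indicator (grid_cell M z) y)" for y
    unfolding cellwise_mean_def sum_indicator_grid_cell[OF finite_unit_grid] by simp
  then have "(\<integral>y. cellwise_mean M p y * ln (cellwise_mean M p y) \<partial>lborel) =
      (\<integral>y. (\<Sum>z\<in>unit_grid M. ?g z * indicator (grid_cell M z) y) \<partial>lborel)"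
    by simp
  also have "\<dots> = (\<Sum>z\<in>unit_grid M. \<integral>y. ?g z * indicator (grid_cell M z) y \<partial>lborel)"
    by (intro Bochner_Integration.integral_sum integrable_mult_indicator_grid_cell[OF assms])
  finally show ?thesis
    by (simp only: integral_mult_indicator_grid_cell[OF assms])
qed

section \<open>Lipschitz densities on the unit cube\<close>

lemma l1_dist_le_card_mult_dist: "l1_dist x y \<le> CARD('n) * dist x (y :: real^'n)"
proof -
  have "l1_dist x y \<le> (\<Sum>i\<in>(UNIV::'n set). dist x y)"
    unfolding l1_dist_def dist_norm
    by (intro sum_mono) (metis component_le_norm_cart vector_minus_component)
  then show ?thesis by simp
qed

lemma l1_dist_update_component:
  "l1_dist y (\<chi> j. if j = i then t else y $ j) = \<bar>y $ i - t\<bar>"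
proof -
  have "l1_dist y (\<chi> j. if j = i then t else y $ j) = (\<Sum>j\<in>UNIV. if j = i then \<bar>y $ i - t\<bar> else 0)"
    unfolding l1_dist_def by (rule sum.cong) auto
  then show ?thesis by simp
qed

locale unit_cube_lipschitz_density =
  fixes p :: "real^'n \<Rightarrow> real" and L :: real
  assumes L_pos: "0 < L"
    and nonneg: "\<And>x. 0 \<le> p x"
    and zero_outside: "\<And>x. x \<notin> cbox 0 1 \<Longrightarrow> p x = 0"
    and lipschitz: "\<And>x y. \<bar>p x - p y\<bar> \<le> L * l1_dist x y"
begin

lemma continuous: "continuous_on UNIV p"
proof (rule lipschitz_on_continuous_on)
  show "(L * CARD('n))-lipschitz_on UNIV p"
  proof (rule lipschitz_onI)
    fix x y :: "real^'n"
    have "dist (p x) (p y) \<le> L * l1_dist x y"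
      using lipschitz by (simp add: dist_real_def)
    also have "\<dots> \<le> L * (CARD('n) * dist x y)"
      using L_pos l1_dist_le_card_mult_dist by (simp add: mult_left_mono)
    finally show "dist (p x) (p y) \<le> L * CARD('n) * dist x y"
      by (simp add: mult.assoc)
  qed (use L_pos in simp)
qed

lemma borel_measurable_density [measurable]: "p \<in> borel_measurable borel"
  by (rule borel_measurable_continuous_onI[OF continuous])

text \<open>
  Grid cells are half-open, so a point with a coordinate equal to \<open>1\<close> lies in a cell outside
  the unit grid; continuity forces \<open>p\<close> to vanish there.
\<close>

lemma zero_if_component_ge_1:
  assumes "1 \<le> y $ i"
  shows "p y = 0"
proof -
  have "p y \<le> 0 + e" if "0 < e" for e
  proof -
    define y' where "y' = (\<chi> j. if j = i then y $ i + e / L else y $ j)"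
    have "y' \<notin> cbox 0 1"
      using assms divide_pos_pos[OF that L_pos] by (auto simp: mem_box_cart y'_def intro!: exI[of _ i])
    then have "p y \<le> \<bar>p y - p y'\<bar>"
      using zero_outside by simp
    also have "\<dots> \<le> L * (e / L)"
      using lipschitz[of y y'] that L_pos by (simp add: y'_def l1_dist_update_component)
    finally show ?thesis
      using L_pos by simp
  qed
  then have "p y \<le> 0"
    by (rule field_le_epsilon)
  then show ?thesis
    using nonneg[of y] by simp
qed

lemma zero_off_unit_grid:
  assumes "0 < M" and "grid_index M y \<notin> unit_grid M"
  shows "p y = 0"
proof -
  obtain i where "y $ i < 0 \<or> 1 \<le> y $ i"
    using grid_index_notin_unit_grid[OF assms] .
  then show ?thesis
  proof
    assume "y $ i < 0"
    then have "y \<notin> cbox 0 1"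
      by (auto simp: mem_box_cart intro!: exI[of _ i])
    then show ?thesis
      by (rule zero_outside)
  qed (rule zero_if_component_ge_1)
qed

lemma bounded: "p y \<le> 2 * L * CARD('n)"
proof (cases "y \<in> cbox 0 1")
  case True
  then have "\<bar>y $ j - 2\<bar> \<le> 2" for j
    by (auto simp: mem_box_cart abs_le_iff dest: spec[of _ j])
  have "(\<chi> j. 2) \<notin> cbox (0::real^'n) 1"
    by (simp add: mem_box_cart)
  then have "p y \<le> L * l1_dist y (\<chi> j. 2)"
    using lipschitz[of y "\<chi> j. 2"] zero_outside by simp
  also have "\<dots> \<le> L * (\<Sum>j\<in>(UNIV::'n set). 2)"
    using \<open>\<And>j. \<bar>y $ j - 2\<bar> \<le> 2\<close> L_pos unfolding l1_dist_def
    by (intro mult_left_mono sum_mono) auto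
  finally show ?thesis by simp
next
  case False
  then show ?thesis using zero_outside[of y] L_pos by simp
qed

lemma integrable: "integrable lborel p"
proof (rule integrableI_bounded_set[where A="cbox 0 1" and B="2 * L * CARD('n)"])
  show "AE x in lborel. x \<in> cbox 0 1 \<longrightarrow> norm (p x) \<le> 2 * L * CARD('n)"
    using nonneg bounded by simp
  show "AE x in lborel. x \<notin> cbox 0 1 \<longrightarrow> p x = 0"
    using zero_outside by simp
  show "emeasure lborel (cbox (0::real^'n) 1) < \<infinity>"
    by (rule emeasure_lborel_cbox_finite)
qed simp_all

lemma integrable_mult_ln: "integrable lborel (\<lambda>x. p x * ln (p x))"
proof (rule integrableI_bounded_set[where A="cbox 0 1" and B="1 + (2 * L * CARD('n))\<^sup>2"])
  show "AE x in lborel. x \<in> cbox 0 1 \<longrightarrow> norm (p x * ln (p x)) \<le> 1 + (2 * L * CARD('n))\<^sup>2"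
    using nonneg bounded abs_mult_ln_le by simp
  show "AE x in lborel. x \<notin> cbox 0 1 \<longrightarrow> p x * ln (p x) = 0"
    using zero_outside by simp
  show "emeasure lborel (cbox (0::real^'n) 1) < \<infinity>"
    by (rule emeasure_lborel_cbox_finite)
qed simp_all

lemma le_cell_mean_add:
  assumes "0 < M" and "x \<in> grid_cell M z"
  shows "p x \<le> cell_mean M p z + L * CARD('n) / M"
proof -
  let ?\<delta> = "L * CARD('n) / M"
  have "p x - ?\<delta> \<le> p y" if "y \<in> grid_cell M z" for y
    using lipschitz[of x y] l1_dist_le_in_grid_cell[OF assms(1,2) that] L_pos
      mult_left_mono[of "l1_dist x y" "CARD('n) / M" L] by simp
  then have "(\<integral>y. (p x - ?\<delta>) * indicator (grid_cell M z) y \<partial>lborel)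
      \<le> (\<integral>y. p y * indicator (grid_cell M z) y \<partial>lborel)"
    by (intro integral_mono integrable_mult_indicator_grid_cell[OF assms(1)]
        integrable_real_mult_indicator integrable) (auto split: split_indicator)
  then have "(1 / real M) ^ CARD('n) * (p x - ?\<delta>) \<le> (\<integral>y. p y * indicator (grid_cell M z) y \<partial>lborel)"
    by (simp only: integral_mult_indicator_grid_cell[OF assms(1)])
  also have "\<dots> = (1 / real M) ^ CARD('n) * cell_mean M p z"
    using assms(1) by (simp add: cell_mean_def measure_grid_cell)
  finally show ?thesis
    using assms(1) by simp
qed

lemma set_integral_mult_ln_grid_cell_bounds:
  assumes "0 < M"
  shows "(1 / real M) ^ CARD('n) * (cell_mean M p z * ln (cell_mean M p z))
      \<le> (\<integral>y. p y * ln (p y) * indicator (grid_cell M z) y \<partial>lborel)"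
    and "(\<integral>y. p y * ln (p y) * indicator (grid_cell M z) y \<partial>lborel)
      \<le> (1 / real M) ^ CARD('n) * (cell_mean M p z * ln (cell_mean M p z) + L * CARD('n) / M)"
proof -
  have cell: "grid_cell M z \<in> sets lborel" "0 < measure lborel (grid_cell M z)"
    using assms by (simp_all add: sets_grid_cell measure_grid_cell)
  note ints = integrable_real_mult_indicator[OF cell(1) integrable]
    integrable_real_mult_indicator[OF cell(1) integrable_mult_ln]
  have "0 \<le> L * CARD('n) / M"
    using L_pos by simp
  show "(1 / real M) ^ CARD('n) * (cell_mean M p z * ln (cell_mean M p z))
      \<le> (\<integral>y. p y * ln (p y) * indicator (grid_cell M z) y \<partial>lborel)"
    using set_integral_mult_ln_ge_mean[OF cell nonneg ints]
    unfolding measure_grid_cell[OF assms, of z, symmetric] cell_mean_def .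
  show "(\<integral>y. p y * ln (p y) * indicator (grid_cell M z) y \<partial>lborel)
      \<le> (1 / real M) ^ CARD('n) * (cell_mean M p z * ln (cell_mean M p z) + L * CARD('n) / M)"
    unfolding measure_grid_cell[OF assms, of z, symmetric] cell_mean_def
    by (rule set_integral_mult_ln_le_mean[OF cell nonneg ints \<open>0 \<le> L * CARD('n) / M\<close>])
      (rule le_cell_mean_add[OF assms, unfolded cell_mean_def])
qed

lemma diff_entropy_cellwise_mean_bounds:
  assumes "0 < M"
  shows "0 \<le> diff_entropy (cellwise_mean M p) - diff_entropy p"
    and "diff_entropy (cellwise_mean M p) - diff_entropy p \<le> L * CARD('n) / M"
proof -
  let ?v = "(1 / real M) ^ CARD('n)" and ?\<delta> = "L * CARD('n) / M"
  define gap where "gap z = (\<integral>y. p y * ln (p y) * indicator (grid_cell M z) y \<partial>lborel)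
    - ?v * (cell_mean M p z * ln (cell_mean M p z))" for z
  have diff: "diff_entropy (cellwise_mean M p) - diff_entropy p = (\<Sum>z\<in>unit_grid M. gap z)"
    using integral_eq_sum_grid_cells[OF integrable_mult_ln] zero_off_unit_grid[OF assms]
    by (simp add: diff_entropy_def integral_cellwise_mean_mult_ln[OF assms] gap_def sum_subtractf)
  have gap_bounds: "0 \<le> gap z \<and> gap z \<le> ?v * ?\<delta>" for z
    using set_integral_mult_ln_grid_cell_bounds[OF assms, of z] by (simp add: gap_def algebra_simps)
  show "0 \<le> diff_entropy (cellwise_mean M p) - diff_entropy p"
    unfolding diff using gap_bounds by (simp add: sum_nonneg)
  have "(\<Sum>z\<in>unit_grid M. gap z) \<le> card (unit_grid M :: ('n \<Rightarrow> int) set) * (?v * ?\<delta>)"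
    by (rule sum_bounded_above) (use gap_bounds in blast)
  also have "\<dots> = ?\<delta>"
    using assms by (simp add: card_unit_grid power_mult_distrib[symmetric])
  finally show "diff_entropy (cellwise_mean M p) - diff_entropy p \<le> ?\<delta>"
    unfolding diff .
qed

end

section \<open>The law of the dithered quantization\<close>

lemma (in prob_space) emeasure_distr_indep_pair:
  assumes "indep_var borel X borel Y"
    and [measurable]: "f \<in> borel_measurable (borel \<Otimes>\<^sub>M borel)" "A \<in> sets borel"
  shows "emeasure (distr M borel (\<lambda>\<omega>. f (X \<omega>, Y \<omega>))) A =
    (\<integral>\<^sup>+x. \<integral>\<^sup>+y. indicator A (f (x, y)) \<partial>distr M borel Y \<partial>distr M borel X)"
proof -
  have [measurable]: "X \<in> borel_measurable M" "Y \<in> borel_measurable M"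
    using indep_var_rv1[OF assms(1)] indep_var_rv2[OF assms(1)] by auto
  interpret Y: prob_space "distr M borel Y"
    by (rule prob_space_distr) simp
  have "emeasure (distr M borel (\<lambda>\<omega>. f (X \<omega>, Y \<omega>))) A
      = emeasure (distr (distr M (borel \<Otimes>\<^sub>M borel) (\<lambda>\<omega>. (X \<omega>, Y \<omega>))) borel f) A"
    by (simp add: distr_distr comp_def)
  also have "\<dots> = emeasure (distr (distr M borel X \<Otimes>\<^sub>M distr M borel Y) borel f) A"
    using assms(1) by (simp add: indep_var_distribution_eq)
  also have "\<dots> = (\<integral>\<^sup>+v. indicator A v \<partial>distr (distr M borel X \<Otimes>\<^sub>M distr M borel Y) borel f)"
    by (rule nn_integral_indicator[symmetric]) simp
  also have "\<dots> = (\<integral>\<^sup>+v. indicator A (f v) \<partial>(distr M borel X \<Otimes>\<^sub>M distr M borel Y))"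
    by (rule nn_integral_distr) simp_all
  also have "\<dots> = (\<integral>\<^sup>+x. \<integral>\<^sup>+y. indicator A (f (x, y)) \<partial>distr M borel Y \<partial>distr M borel X)"
    by (rule Y.nn_integral_fst[symmetric]) simp
  finally show ?thesis .
qed

lemma nn_integral_indicator_quantize_add_uniform:
  fixes x :: "real^'n"
  assumes "0 < M" and [measurable]: "A \<in> sets borel"
  shows "(\<integral>\<^sup>+u. indicator A (quantize M x + u) \<partial>uniform_measure lborel (cbox 0 (\<chi> i. 1 / real M))) =
    emeasure lborel (A \<inter> grid_cell M (grid_index M x)) / ennreal ((1 / real M) ^ CARD('n))"
proof -
  let ?B = "cbox (0::real^'n) (\<chi> i. 1 / real M)" and ?C = "grid_cell M (\<lambda>i. 0) :: (real^'n) set"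
  have "(\<integral>\<^sup>+u. indicator A (quantize M x + u) * indicator ?B u \<partial>lborel)
      = (\<integral>\<^sup>+u. indicator A (quantize M x + u) * indicator ?C u \<partial>lborel)"
    using AE_mem_cube_iff_mem_grid_cell[OF assms(1)]
    by (intro nn_integral_cong_AE) (auto split: split_indicator)
  also have "\<dots> = (\<integral>\<^sup>+y. indicator A y * indicator ?C (y - quantize M x) \<partial>distr lborel borel ((+) (quantize M x)))"
    by (subst nn_integral_distr) simp_all
  also have "\<dots> = (\<integral>\<^sup>+y. indicator (A \<inter> grid_cell M (grid_index M x)) y \<partial>lborel)"
    unfolding lborel_distr_plus
    by (intro nn_integral_cong) (simp add: diff_quantize_mem_grid_cell_0_iff[OF assms(1)] split: split_indicator)
  finally show ?thesis
    using emeasure_lborel_cube(1)[of "1 / real M" "0::real^'n"]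
    by (simp add: nn_integral_uniform_measure)
qed

lemma nn_integral_mult_grid_index:
  fixes p :: "real^'n \<Rightarrow> real" and G :: "('n \<Rightarrow> int) \<Rightarrow> ennreal"
  assumes "0 < M" and p_nonneg: "\<And>x. 0 \<le> p x" and "integrable lborel p"
    and p_grid: "\<And>y. grid_index M y \<notin> unit_grid M \<Longrightarrow> p y = 0"
  shows "(\<integral>\<^sup>+x. ennreal (p x) * (G (grid_index M x) / ennreal ((1 / real M) ^ CARD('n))) \<partial>lborel) =
    (\<Sum>z\<in>unit_grid M. ennreal (cell_mean M p z) * G z)"
proof -
  let ?v = "(1 / real M) ^ CARD('n)" and ?H = "\<lambda>z. G z / ennreal ((1 / real M) ^ CARD('n))"
  have [measurable]: "p \<in> borel_measurable borel"
    using borel_measurable_integrable[OF assms(3)] by simp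
  have "ennreal (p x) * ?H (grid_index M x) =
      (\<Sum>z\<in>unit_grid M. ennreal (p x * indicator (grid_cell M z) x) * ?H z)" for x
  proof -
    have "ennreal (p x * indicator (grid_cell M z) x) * ?H z =
        (ennreal (p x) * ?H z) * indicator (grid_cell M z) x" for z
      by (simp split: split_indicator)
    then show ?thesis
      using p_grid[of x] by (simp only: sum_indicator_grid_cell[OF finite_unit_grid]) simp
  qed
  then have "(\<integral>\<^sup>+x. ennreal (p x) * ?H (grid_index M x) \<partial>lborel) =
      (\<Sum>z\<in>unit_grid M. (\<integral>\<^sup>+x. ennreal (p x * indicator (grid_cell M z) x) \<partial>lborel) * ?H z)"
    by (simp add: nn_integral_sum nn_integral_multc)
  also have "\<dots> = (\<Sum>z\<in>unit_grid M. ennreal (cell_mean M p z) * G z)"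
  proof (rule sum.cong[OF refl])
    fix z
    have "(\<integral>\<^sup>+x. ennreal (p x * indicator (grid_cell M z) x) \<partial>lborel) =
        ennreal (\<integral>x. p x * indicator (grid_cell M z) x \<partial>lborel)"
      using assms(3) p_nonneg by (intro nn_integral_eq_integral integrable_real_mult_indicator) auto
    also have "\<dots> = ennreal (?v * cell_mean M p z)"
      using assms(1) by (simp add: cell_mean_def measure_grid_cell)
    also have "\<dots> * ?H z = ennreal (cell_mean M p z) * G z * ennreal ?v / ennreal ?v"
      using cell_mean_nonneg[of p M z, OF p_nonneg] by (simp add: ennreal_mult ennreal_times_divide mult_ac)
    also have "\<dots> = ennreal (cell_mean M p z) * G z"
      using assms(1) by (intro ennreal_mult_divide_eq) simp_all
    finally show "(\<integral>\<^sup>+x. ennreal (p x * indicator (grid_cell M z) x) \<partial>lborel) * ?H z =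
        ennreal (cell_mean M p z) * G z" .
  qed
  finally show ?thesis .
qed

lemma emeasure_density_cellwise_mean:
  assumes "\<And>x. 0 \<le> p x" and [measurable]: "A \<in> sets borel"
  shows "emeasure (density lborel (\<lambda>y. ennreal (cellwise_mean M p y))) A =
    (\<Sum>z\<in>unit_grid M. ennreal (cell_mean M p z) * emeasure lborel (A \<inter> grid_cell M z))"
proof -
  have "ennreal (cellwise_mean M p y) = (\<Sum>z\<in>unit_grid M. ennreal (cell_mean M p z) * indicator (grid_cell M z) y)" for y
    unfolding cellwise_mean_def sum_indicator_grid_cell[OF finite_unit_grid] by simp
  then have "ennreal (cellwise_mean M p y) * indicator A y =
      (\<Sum>z\<in>unit_grid M. ennreal (cell_mean M p z) * indicator (A \<inter> grid_cell M z) y)" for y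
    by (simp add: sum_distrib_left indicator_inter_arith mult_ac)
  then show ?thesis
    by (simp add: emeasure_density nn_integral_sum nn_integral_cmult_indicator)
qed

lemma distr_quantize_add_uniform:
  fixes X U :: "'a \<Rightarrow> real^'n" and p :: "real^'n \<Rightarrow> real"
  assumes "prob_space P" and "0 < M"
    and p_nonneg: "\<And>x. 0 \<le> p x" and "integrable lborel p"
    and p_grid: "\<And>y. grid_index M y \<notin> unit_grid M \<Longrightarrow> p y = 0"
    and X_dens: "distributed P lborel X (\<lambda>x. ennreal (p x))"
    and U_unif: "distr P lborel U = uniform_measure lborel (cbox 0 (\<chi> i. 1 / real M))"
    and indep: "prob_space.indep_var P borel X borel U"
  shows "distr P lborel (\<lambda>\<omega>. quantize M (X \<omega>) + U \<omega>) =
    density lborel (\<lambda>y. ennreal (cellwise_mean M p y))"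
proof (rule measure_eqI)
  interpret prob_space P by fact
  fix A assume "A \<in> sets (distr P lborel (\<lambda>\<omega>. quantize M (X \<omega>) + U \<omega>))"
  then have [measurable]: "A \<in> sets borel" by simp
  have [measurable]: "X \<in> borel_measurable P" "U \<in> borel_measurable P"
    using indep_var_rv1[OF indep] indep_var_rv2[OF indep] by auto
  interpret U: prob_space "distr P borel U"
    by (rule prob_space_distr) simp
  have [measurable]: "p \<in> borel_measurable borel"
    using distributed_real_measurable[OF _ X_dens] p_nonneg by simp
  have X_distr: "distr P borel X = density lborel (\<lambda>x. ennreal (p x))"
    using distributed_distr_eq_density[OF X_dens] by (simp cong: distr_cong)
  have U_distr: "distr P borel U = uniform_measure lborel (cbox 0 (\<chi> i. 1 / real M))"
    using U_unif by (simp cong: distr_cong)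
  have "emeasure (distr P lborel (\<lambda>\<omega>. quantize M (X \<omega>) + U \<omega>)) A
      = emeasure (distr P borel (\<lambda>\<omega>. quantize M (X \<omega>) + U \<omega>)) A"
    by (simp add: emeasure_distr)
  also have "\<dots> = (\<integral>\<^sup>+x. \<integral>\<^sup>+u. indicator A (quantize M x + u) \<partial>distr P borel U \<partial>distr P borel X)"
    using emeasure_distr_indep_pair[OF indep, of "\<lambda>(x, u). quantize M x + u" A] by simp
  also have "\<dots> = (\<integral>\<^sup>+x. ennreal (p x) * (\<integral>\<^sup>+u. indicator A (quantize M x + u) \<partial>distr P borel U) \<partial>lborel)"
    unfolding X_distr by (intro nn_integral_density) measurable
  also have "\<dots> = (\<integral>\<^sup>+x. ennreal (p x) *
      (emeasure lborel (A \<inter> grid_cell M (grid_index M x)) / ennreal ((1 / real M) ^ CARD('n))) \<partial>lborel)"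
    by (simp add: U_distr nn_integral_indicator_quantize_add_uniform[OF assms(2)])
  also have "\<dots> = (\<Sum>z\<in>unit_grid M. ennreal (cell_mean M p z) * emeasure lborel (A \<inter> grid_cell M z))"
    by (rule nn_integral_mult_grid_index[OF assms(2) p_nonneg assms(4) p_grid])
  also have "\<dots> = emeasure (density lborel (\<lambda>y. ennreal (cellwise_mean M p y))) A"
    by (simp add: emeasure_density_cellwise_mean[OF p_nonneg])
  finally show "emeasure (distr P lborel (\<lambda>\<omega>. quantize M (X \<omega>) + U \<omega>)) A =
      emeasure (density lborel (\<lambda>y. ennreal (cellwise_mean M p y))) A" .
qed simp

lemma diff_entropy_density_unique:
  assumes "distributed P lborel Y (\<lambda>x. ennreal (q x))" and "\<And>x. 0 \<le> q x"
    and "distr P lborel Y = density lborel (\<lambda>x. ennreal (g x))"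
    and "\<And>x. 0 \<le> g x" and "g \<in> borel_measurable borel"
  shows "diff_entropy q = diff_entropy g"
proof -
  have "AE x in lborel. ennreal (q x) = ennreal (g x)"
    using assms(1,3,5) distributed_borel_measurable[OF assms(1)]
    by (subst sigma_finite_measure.density_unique_iff[OF sigma_finite_lborel, symmetric])
      (simp_all add: distributed_distr_eq_density)
  then have "AE x in lborel. q x * ln (q x) = g x * ln (g x)"
    by eventually_elim (simp add: assms(2,4))
  moreover have [measurable]: "q \<in> borel_measurable borel"
    using distributed_real_measurable[OF _ assms(1)] assms(2) by simp
  ultimately have "(\<integral>x. q x * ln (q x) \<partial>lborel) = (\<integral>x. g x * ln (g x) \<partial>lborel)"
    using assms(5) by (intro integral_cong_AE) simp_all
  then show ?thesis
    by (simp add: diff_entropy_def)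
qed

lemma exp_1_less_sqrt: "exp 1 < sqrt (exp 2 + 4)"
proof -
  have "exp 1 = sqrt ((exp 1)\<^sup>2)"
    by simp
  also have "\<dots> < sqrt (exp 2 + 4)"
    by (simp add: power2_eq_square exp_add[symmetric])
  finally show ?thesis .
qed

lemma inverse_alpha_eq: "1 / alpha = exp 1 * (sqrt (exp 2 + 4) + exp 1) / 2"
proof -
  define e s where "e = exp (1::real)" and "s = sqrt (exp 2 + 4)"
  have "0 < e" "e < s"
    using exp_1_less_sqrt by (simp_all add: e_def s_def)
  have "(s - e) * (s + e) = 4"
    by (simp add: s_def e_def algebra_simps exp_add[symmetric])
  then have s_minus_e: "s - e = 4 / (s + e)"
    using \<open>0 < e\<close> \<open>e < s\<close> by (simp add: field_simps)
  have "1 / alpha = 2 * e / (s - e)"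
    by (simp add: alpha_def e_def s_def)
  also have "\<dots> = e * (s + e) / 2"
    unfolding s_minus_e by simp
  finally show ?thesis
    by (simp add: e_def s_def)
qed

lemma exp_2_less_inverse_alpha: "exp 2 < 1 / alpha"
proof -
  have "exp 2 = exp 1 * (exp 1 + exp 1) / (2::real)"
    by (simp add: exp_add[symmetric])
  also have "\<dots> < exp 1 * (sqrt (exp 2 + 4) + exp 1) / 2"
    using exp_1_less_sqrt by simp
  finally show ?thesis
    by (simp add: inverse_alpha_eq)
qed

theorem lemma7:
  fixes P :: "'a measure"
    and X U :: "'a \<Rightarrow> real^'n"
    and p q :: "real^'n \<Rightarrow> real"
    and M :: nat and L :: real
  assumes "prob_space P"
    and "L > 0"
    and p_nonneg: "\<And>x. p x \<ge> 0"
    and p_supp: "\<And>x. x \<notin> cbox 0 1 \<Longrightarrow> p x = 0"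
    and p_lip: "\<And>x y. \<bar>p x - p y\<bar> \<le> L * l1_dist x y"
    and X_dens: "distributed P lborel X (\<lambda>x. ennreal (p x))"
    and U_meas: "U \<in> borel_measurable P"
    and U_unif: "distr P lborel U = uniform_measure lborel (cbox 0 (\<chi> i. 1 / real M))"
    and indep: "prob_space.indep_var P borel X borel U"
    and q_nonneg: "\<And>x. q x \<ge> 0"
    and Xbar_dens: "distributed P lborel (\<lambda>\<omega>. quantize M (X \<omega>) + U \<omega>) (\<lambda>x. ennreal (q x))"
    and M_large: "real M \<ge> 1 / (alpha * eta CARD('n) L)"
  shows "\<bar>diff_entropy q - diff_entropy p\<bar>
           \<le> L * real CARD('n) / (2 * real M) * ln (real M * eta CARD('n) L)"
proof -
  let ?\<eta> = "eta CARD('n) L"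
  have "0 < ?\<eta>"
    using \<open>L > 0\<close> by (simp add: eta_def)
  moreover have "0 < alpha"
    using exp_2_less_inverse_alpha exp_gt_zero[of 2] zero_less_divide_1_iff by fastforce
  ultimately have "1 / alpha \<le> real M * ?\<eta>"
    using M_large by (simp add: field_simps)
  then have "exp 2 < real M * ?\<eta>"
    using exp_2_less_inverse_alpha by linarith
  then have "0 < M" and ln_large: "2 < ln (real M * ?\<eta>)"
    using ln_less_cancel_iff[of "exp 2" "real M * ?\<eta>"] exp_gt_zero[of 2] by (auto intro: gr0I)
  interpret unit_cube_lipschitz_density p L
    using \<open>L > 0\<close> p_nonneg p_supp p_lip by unfold_locales
  have "diff_entropy q = diff_entropy (cellwise_mean M p)"
    using distr_quantize_add_uniform[OF assms(1) \<open>0 < M\<close> p_nonneg integrable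
        zero_off_unit_grid[OF \<open>0 < M\<close>] X_dens U_unif indep]
    by (intro diff_entropy_density_unique[OF Xbar_dens q_nonneg])
      (simp_all add: cellwise_mean_nonneg p_nonneg)
  then have "\<bar>diff_entropy q - diff_entropy p\<bar> \<le> L * CARD('n) / (2 * real M) * 2"
    using diff_entropy_cellwise_mean_bounds[OF \<open>0 < M\<close>] by simp
  also have "\<dots> \<le> L * CARD('n) / (2 * real M) * ln (real M * ?\<eta>)"
    using ln_large \<open>L > 0\<close> by (intro mult_left_mono) simp_all
  finally show ?thesis .
qed

end
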